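(* Consider $\bar{\mathbb R}_+=[0,\infty]$ as a general metric space with distance $(x,y)\mapsto[x,y]$, and for a filter $\mathcal F$ on it put $\liminf(\mathcal F)=\sup_{f\in\mathcal F}\inf f$. Then: (a) a filter $\mathcal F$ on $[0,\infty]$ is weakly flat if and only if either $\liminf(\mathcal F)<\infty$ or $\mathcal F$ is the principal filter $\{f:\infty\in f\}$; (b) every weakly flat filter on $[0,\infty]$ is flat; (c) for weakly flat filters $\mathcal F_1,\mathcal F_2$ on $[0,\infty]$, $\sup_{x}[M^-(\mathcal F_1)(x),M^-(\mathcal F_2)(x)]=[\liminf(\mathcal F_1),\liminf(\mathcal F_2)]$. Consequently the $\mathcal P_1$- and $\mathcal P_2$-completions of $\bar{\mathbb R}_+$ are both isomorphic to $\bar{\mathbb R}_+$.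
   Context: $[x,y]=\max(y-x,0)$ for finite $x,y$, $[x,\infty]=\infty$ for $x<\infty$, $[\infty,y]=0$. A filter on a set is a nonempty set of nonempty subsets closed under finite intersections and supersets. For a general metric space $A$ (here $A(x,y)=[x,y]$), $M^-(\mathcal F)(x)=\sup_{f\in\mathcal F}\inf_{y\in f}A(x,y)$; $\mathcal F$ is weakly flat iff for every $\epsilon>0$ there is $f\in\mathcal F$ such that for all $x\in f$ and $g\in\mathcal F$ there is $y\in g$ with $A(x,y)\le\epsilon$; flat iff the same holds for every finite family $x_1,\dots,x_n\in f$ with a common $y\in g$. The $\mathcal P_1$-completion (resp. $\mathcal P_2$-completion) of $A$ is the general metric space of closed weakly flat (resp. closed flat) filters with distance $\sup_x[M^-(\mathcal F_1)(x),M^-(\mathcal F_2)(x)]$, where a weakly flat $\mathcal F$ is closed iff every $f\in\mathcal F$ contains some $\{x:M^-(\mathcal F)(x)\le\epsilon\}$, $\epsilon>0$. *)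

theory Defs
  imports "HOL-Library.Extended_Nonnegative_Real"
begin

definition rdist :: "ennreal \<Rightarrow> ennreal \<Rightarrow> ennreal" where
  "rdist x y = (if x = \<infinity> then 0 else if y = \<infinity> then \<infinity>
                else ennreal (max (enn2real y - enn2real x) 0))"

definition is_filter :: "'a set set \<Rightarrow> bool" where
  "is_filter F \<longleftrightarrow> F \<noteq> {} \<and> (\<forall>f\<in>F. f \<noteq> {})
     \<and> (\<forall>f\<in>F. \<forall>g\<in>F. f \<inter> g \<in> F)
     \<and> (\<forall>f\<in>F. \<forall>g. f \<subseteq> g \<longrightarrow> g \<in> F)"

definition M_minus :: "('a \<Rightarrow> 'a \<Rightarrow> ennreal) \<Rightarrow> 'a set set \<Rightarrow> 'a \<Rightarrow> ennreal" where
  "M_minus A F x = (SUP f\<in>F. INF y\<in>f. A x y)"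

definition weakly_flat :: "('a \<Rightarrow> 'a \<Rightarrow> ennreal) \<Rightarrow> 'a set set \<Rightarrow> bool" where
  "weakly_flat A F \<longleftrightarrow> is_filter F \<and>
     (\<forall>\<epsilon>::real. \<epsilon> > 0 \<longrightarrow> (\<exists>f\<in>F. \<forall>x\<in>f. \<forall>g\<in>F. \<exists>y\<in>g. A x y \<le> ennreal \<epsilon>))"

definition flat :: "('a \<Rightarrow> 'a \<Rightarrow> ennreal) \<Rightarrow> 'a set set \<Rightarrow> bool" where
  "flat A F \<longleftrightarrow> is_filter F \<and>
     (\<forall>\<epsilon>::real. \<epsilon> > 0 \<longrightarrow> (\<exists>f\<in>F. \<forall>S. finite S \<and> S \<subseteq> f \<longrightarrow>
        (\<forall>g\<in>F. \<exists>y\<in>g. \<forall>x\<in>S. A x y \<le> ennreal \<epsilon>)))"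

definition closed_filter :: "('a \<Rightarrow> 'a \<Rightarrow> ennreal) \<Rightarrow> 'a set set \<Rightarrow> bool" where
  "closed_filter A F \<longleftrightarrow>
     (\<forall>f\<in>F. \<exists>\<epsilon>::real. \<epsilon> > 0 \<and> {x. M_minus A F x \<le> ennreal \<epsilon>} \<subseteq> f)"

definition compl_dist :: "('a \<Rightarrow> 'a \<Rightarrow> ennreal) \<Rightarrow> 'a set set \<Rightarrow> 'a set set \<Rightarrow> ennreal" where
  "compl_dist A F1 F2 = (SUP x. rdist (M_minus A F1 x) (M_minus A F2 x))"

definition P1_completion :: "('a \<Rightarrow> 'a \<Rightarrow> ennreal) \<Rightarrow> 'a set set set" where
  "P1_completion A = {F. weakly_flat A F \<and> closed_filter A F}"

definition P2_completion :: "('a \<Rightarrow> 'a \<Rightarrow> ennreal) \<Rightarrow> 'a set set set" where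
  "P2_completion A = {F. flat A F \<and> closed_filter A F}"

definition gms_iso :: "'a set \<Rightarrow> ('a \<Rightarrow> 'a \<Rightarrow> ennreal) \<Rightarrow> 'b set \<Rightarrow> ('b \<Rightarrow> 'b \<Rightarrow> ennreal) \<Rightarrow> bool" where
  "gms_iso X dX Y dY \<longleftrightarrow> (\<exists>\<phi>. bij_betw \<phi> X Y \<and> (\<forall>a\<in>X. \<forall>b\<in>X. dY (\<phi> a) (\<phi> b) = dX a b))"

definition liminf_filter :: "ennreal set set \<Rightarrow> ennreal" where
  "liminf_filter F = (SUP f\<in>F. Inf f)"

end

theory Submission
  imports Defs
begin

text \<open>
  Write L for the liminf of a filter F. For finite x the distance [x,y] is the truncated
  difference y - x, so M^-(F)(x) = [x, L] for every filter; part (c) then reduces to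
  sup_x [[x,a],[x,b]] = [a,b], which follows from the triangle inequality and is attained
  at x = 0. If L < \<infinity>, pick f \<in> F with inf f > L - \<epsilon>; every g \<in> F has a point y below
  inf f + \<epsilon>, and this single y is \<epsilon>-close to all of f simultaneously, so F is flat.
  If L = \<infinity>, the member f granted by weak flatness for \<epsilon> = 1 can contain no finite
  point, so F is principal at \<infinity>. Finally, a closed weakly flat filter is generated by
  its \<epsilon>-balls {x. [x,L] \<le> \<epsilon>} = [L - \<epsilon>, \<infinity>], hence is determined by L, and the
  liminf is an isometry from either completion onto [0,\<infinity>].
\<close>

lemma rdist_eq: "rdist x y = (if x = \<infinity> then 0 else y - x)"
  unfolding rdist_def
  by (cases x rule: ennreal_cases; cases y rule: ennreal_cases)
     (auto simp: ennreal_minus max_def ennreal_neg)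

lemma rdist_le_iff: "rdist x y \<le> c \<longleftrightarrow> x = \<infinity> \<or> y \<le> x + c"
  by (auto simp: rdist_eq ennreal_minus_le_iff add.commute)

lemma rdist_self [simp]: "rdist x x = 0"
  by (simp add: rdist_eq)

lemma rdist_zero_left [simp]: "rdist 0 y = y"
  by (simp add: rdist_eq)

lemma rdist_triangle: "rdist x z \<le> rdist x y + rdist y z"
proof (cases "x = \<infinity> \<or> y = \<infinity> \<or> z = \<infinity>")
  case True
  then show ?thesis by (auto simp: rdist_eq)
next
  case False
  then obtain a b c where "x = ennreal a" "y = ennreal b" "z = ennreal c" "a \<ge> 0" "b \<ge> 0" "c \<ge> 0"
    by (metis ennreal_cases infinity_ennreal_def)
  then show ?thesis
    by (cases "a \<le> b"; cases "b \<le> c")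
       (auto simp: rdist_eq ennreal_minus ennreal_neg simp flip: ennreal_plus intro!: ennreal_leI)
qed

lemma rdist_rdist_le: "rdist (rdist x a) (rdist x b) \<le> rdist a b"
  using rdist_triangle[of x b a] by (simp add: rdist_le_iff[of "rdist x a"] add.commute)

lemma INF_diff_ennreal:
  fixes c :: ennreal
  assumes "c < top"
  shows "(INF i\<in>I. f i - c) = (INF i\<in>I. f i) - c"
proof (rule antisym)
  show "(INF i\<in>I. f i) - c \<le> (INF i\<in>I. f i - c)"
    by (rule INF_greatest) (auto intro: ennreal_minus_mono INF_lower)
  let ?I = "INF i\<in>I. f i - c"
  have "?I + c \<le> f i" if "i \<in> I" "?I \<noteq> 0" for i
  proof -
    have "?I \<le> f i - c" using that(1) by (rule INF_lower)
    then have "c < f i"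
      using that(2) assms by (metis diff_eq_0_iff_ennreal le_zero_eq less_top linorder_not_le)
    then show ?thesis
      using \<open>?I \<le> f i - c\<close> by (metis add_right_mono diff_add_cancel_ennreal less_imp_le)
  qed
  then show "?I \<le> (INF i\<in>I. f i) - c"
    by (cases "?I = 0") (auto simp: ennreal_le_minus_iff intro: INF_greatest)
qed

lemma is_filter_nonempty: "is_filter F \<Longrightarrow> F \<noteq> {}"
  and is_filter_mem_nonempty: "is_filter F \<Longrightarrow> f \<in> F \<Longrightarrow> f \<noteq> {}"
  and is_filter_Int: "is_filter F \<Longrightarrow> f \<in> F \<Longrightarrow> g \<in> F \<Longrightarrow> f \<inter> g \<in> F"
  and is_filter_mono: "is_filter F \<Longrightarrow> f \<in> F \<Longrightarrow> f \<subseteq> g \<Longrightarrow> g \<in> F"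
  by (auto simp: is_filter_def)

lemma Inf_le_liminf_filter: "f \<in> F \<Longrightarrow> Inf f \<le> liminf_filter F"
  unfolding liminf_filter_def by (rule SUP_upper)

lemma M_minus_rdist:
  assumes "is_filter F"
  shows "M_minus rdist F x = rdist x (liminf_filter F)"
proof (cases "x = \<infinity>")
  case True
  then show ?thesis
    using is_filter_nonempty[OF assms] is_filter_mem_nonempty[OF assms] by (simp add: M_minus_def rdist_eq)
next
  case False
  then have "rdist x y = y - x" for y
    by (simp add: rdist_eq)
  with False show ?thesis
    by (simp add: M_minus_def liminf_filter_def INF_diff_ennreal SUP_diff_ennreal less_top)
qed

lemma compl_dist_rdist:
  assumes "is_filter F1" "is_filter F2"
  shows "compl_dist rdist F1 F2 = rdist (liminf_filter F1) (liminf_filter F2)"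
  unfolding compl_dist_def M_minus_rdist[OF assms(1)] M_minus_rdist[OF assms(2)]
proof (rule antisym)
  show "(SUP x. rdist (rdist x (liminf_filter F1)) (rdist x (liminf_filter F2)))
      \<le> rdist (liminf_filter F1) (liminf_filter F2)"
    by (rule SUP_least) (rule rdist_rdist_le)
  show "rdist (liminf_filter F1) (liminf_filter F2)
      \<le> (SUP x. rdist (rdist x (liminf_filter F1)) (rdist x (liminf_filter F2)))"
    by (rule SUP_upper2[of 0]) simp_all
qed

lemma flat_if_uniform_witness:
  assumes "is_filter F"
    and "\<And>\<epsilon>. \<epsilon> > 0 \<Longrightarrow> \<exists>f\<in>F. \<forall>g\<in>F. \<exists>y\<in>g. \<forall>x\<in>f. A x y \<le> ennreal \<epsilon>"
  shows "flat A F"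
  unfolding flat_def
proof (intro conjI allI impI assms(1))
  fix \<epsilon> :: real assume "\<epsilon> > 0"
  then obtain f where "f \<in> F" and f: "\<forall>g\<in>F. \<exists>y\<in>g. \<forall>x\<in>f. A x y \<le> ennreal \<epsilon>"
    using assms(2) by blast
  have "\<exists>y\<in>g. \<forall>x\<in>S. A x y \<le> ennreal \<epsilon>" if "S \<subseteq> f" "g \<in> F" for S g
  proof -
    obtain y where "y \<in> g" "\<forall>x\<in>f. A x y \<le> ennreal \<epsilon>"
      using f \<open>g \<in> F\<close> by blast
    with \<open>S \<subseteq> f\<close> show ?thesis by blast
  qed
  with \<open>f \<in> F\<close> show "\<exists>f\<in>F. \<forall>S. finite S \<and> S \<subseteq> f \<longrightarrow> (\<forall>g\<in>F. \<exists>y\<in>g. \<forall>x\<in>S. A x y \<le> ennreal \<epsilon>)"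
    by blast
qed

lemma flat_imp_weakly_flat: "flat A F \<Longrightarrow> weakly_flat A F"
  unfolding flat_def weakly_flat_def
proof (elim conjE, intro conjI allI impI)
  fix \<epsilon> :: real
  assume "\<forall>\<epsilon>>0. \<exists>f\<in>F. \<forall>S. finite S \<and> S \<subseteq> f \<longrightarrow> (\<forall>g\<in>F. \<exists>y\<in>g. \<forall>x\<in>S. A x y \<le> ennreal \<epsilon>)"
    and "\<epsilon> > 0"
  then obtain f where "f \<in> F"
    and f: "\<forall>S. finite S \<and> S \<subseteq> f \<longrightarrow> (\<forall>g\<in>F. \<exists>y\<in>g. \<forall>x\<in>S. A x y \<le> ennreal \<epsilon>)"
    by blast
  have "\<exists>y\<in>g. A x y \<le> ennreal \<epsilon>" if "x \<in> f" "g \<in> F" for x g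
    using f[rule_format, of "{x}" g] that by auto
  with \<open>f \<in> F\<close> show "\<exists>f\<in>F. \<forall>x\<in>f. \<forall>g\<in>F. \<exists>y\<in>g. A x y \<le> ennreal \<epsilon>"
    by blast
qed

lemma flat_rdist_if_liminf_finite_or_principal:
  assumes F: "is_filter F" and "liminf_filter F < \<infinity> \<or> F = {f. \<infinity> \<in> f}"
  shows "flat rdist F"
proof (rule flat_if_uniform_witness[OF F])
  fix \<epsilon> :: real assume "\<epsilon> > 0"
  show "\<exists>f\<in>F. \<forall>g\<in>F. \<exists>y\<in>g. \<forall>x\<in>f. rdist x y \<le> ennreal \<epsilon>"
  proof (cases "liminf_filter F < \<infinity>")
    case True
    then obtain f where f: "f \<in> F" "liminf_filter F < Inf f + ennreal \<epsilon>"
      using SUP_approx_ennreal[OF \<open>\<epsilon> > 0\<close> is_filter_nonempty[OF F] liminf_filter_def] True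
      by (auto simp: less_top)
    have "\<exists>y\<in>g. \<forall>x\<in>f. rdist x y \<le> ennreal \<epsilon>" if "g \<in> F" for g
    proof -
      have "Inf g < Inf f + ennreal \<epsilon>"
        using Inf_le_liminf_filter[OF that] f(2) by (rule le_less_trans)
      then obtain y where "y \<in> g" "y < Inf f + ennreal \<epsilon>"
        by (auto simp: Inf_less_iff)
      moreover have "Inf f + ennreal \<epsilon> \<le> x + ennreal \<epsilon>" if "x \<in> f" for x
        using that by (intro add_right_mono Inf_lower)
      ultimately show ?thesis
        by (meson rdist_le_iff less_imp_le order_trans)
    qed
    with f(1) show ?thesis by blast
  next
    case False
    with assms have "F = {f. \<infinity> \<in> f}" by blast
    then show ?thesis
      by (intro bexI[of _ "{\<infinity>}"] ballI bexI[of _ \<infinity>]) (simp_all add: rdist_eq)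
  qed
qed

lemma weakly_flat_rdist_principal_if_liminf_top:
  assumes W: "weakly_flat rdist F" and L: "liminf_filter F = \<infinity>"
  shows "F = {f. \<infinity> \<in> f}"
proof -
  have F: "is_filter F" using W by (simp add: weakly_flat_def)
  obtain f where f: "f \<in> F" "\<forall>x\<in>f. \<forall>g\<in>F. \<exists>y\<in>g. rdist x y \<le> ennreal 1"
    using W[unfolded weakly_flat_def] zero_less_one by blast
  have "x = \<infinity>" if "x \<in> f" for x
  proof (rule ccontr)
    assume "x \<noteq> \<infinity>"
    have "Inf g \<le> x + 1" if "g \<in> F" for g
    proof -
      obtain y where "y \<in> g" "rdist x y \<le> 1"
        using f(2) \<open>x \<in> f\<close> \<open>g \<in> F\<close> by auto
      then have "y \<le> x + 1"
        using \<open>x \<noteq> \<infinity>\<close> by (simp add: rdist_le_iff)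
      with \<open>y \<in> g\<close> show ?thesis
        by (rule Inf_lower2)
    qed
    then have "liminf_filter F \<le> x + 1"
      unfolding liminf_filter_def by (rule SUP_least)
    with L \<open>x \<noteq> \<infinity>\<close> show False
      by (simp add: top_unique)
  qed
  with is_filter_mem_nonempty[OF F f(1)] have "f = {\<infinity>}" by blast
  show ?thesis
  proof (intro set_eqI iffI)
    fix g assume "g \<in> F"
    then have "f \<inter> g \<noteq> {}"
      by (intro is_filter_mem_nonempty[OF F] is_filter_Int[OF F f(1)])
    with \<open>f = {\<infinity>}\<close> show "g \<in> {f. \<infinity> \<in> f}" by blast
  next
    fix g :: "ennreal set" assume "g \<in> {f. \<infinity> \<in> f}"
    with \<open>f = {\<infinity>}\<close> show "g \<in> F"
      by (intro is_filter_mono[OF F f(1)]) simp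
  qed
qed

lemma weakly_flat_rdist_iff:
  assumes "is_filter F"
  shows "weakly_flat rdist F \<longleftrightarrow> liminf_filter F < \<infinity> \<or> F = {f. \<infinity> \<in> f}"
proof
  show "liminf_filter F < \<infinity> \<or> F = {f. \<infinity> \<in> f}" if "weakly_flat rdist F"
    using weakly_flat_rdist_principal_if_liminf_top[OF that] by (metis less_top infinity_ennreal_def)
  show "weakly_flat rdist F" if "liminf_filter F < \<infinity> \<or> F = {f. \<infinity> \<in> f}"
    by (rule flat_imp_weakly_flat[OF flat_rdist_if_liminf_finite_or_principal[OF assms that]])
qed

lemma weakly_flat_rdist_imp_flat:
  assumes "weakly_flat rdist F"
  shows "flat rdist F"
proof (rule flat_rdist_if_liminf_finite_or_principal)
  show F: "is_filter F" using assms by (simp add: weakly_flat_def)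
  show "liminf_filter F < \<infinity> \<or> F = {f. \<infinity> \<in> f}"
    using assms by (simp add: weakly_flat_rdist_iff[OF F])
qed

definition ball_filter :: "ennreal \<Rightarrow> ennreal set set" where
  "ball_filter L = {f. \<exists>e::real. e > 0 \<and> {x. rdist x L \<le> ennreal e} \<subseteq> f}"

lemma ball_subset_ball:
  assumes "e \<le> e'"
  shows "{x. rdist x L \<le> ennreal e} \<subseteq> {x. rdist x L \<le> ennreal e'}"
  using order_trans[OF _ ennreal_leI[OF assms]] by auto

lemma ball_mem_ball_filter: "e > 0 \<Longrightarrow> {x. rdist x L \<le> ennreal e} \<in> ball_filter L"
  by (auto simp: ball_filter_def)

lemma center_mem_ball_filter: "f \<in> ball_filter L \<Longrightarrow> L \<in> f"
  by (auto simp: ball_filter_def)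

lemma is_filter_ball_filter: "is_filter (ball_filter L)"
  unfolding is_filter_def
proof (intro conjI ballI allI impI)
  show "ball_filter L \<noteq> {}"
    using ball_mem_ball_filter[of 1 L] by auto
  show "f \<noteq> {}" if "f \<in> ball_filter L" for f
    using center_mem_ball_filter[OF that] by blast
  show "f \<inter> g \<in> ball_filter L" if f: "f \<in> ball_filter L" and g: "g \<in> ball_filter L" for f g
  proof -
    obtain e e' where "e > 0" "{x. rdist x L \<le> ennreal e} \<subseteq> f"
      and "e' > 0" "{x. rdist x L \<le> ennreal e'} \<subseteq> g"
      using f g by (auto simp: ball_filter_def)
    then have "{x. rdist x L \<le> ennreal (min e e')} \<subseteq> f \<inter> g"
      using ball_subset_ball[of "min e e'" e L] ball_subset_ball[of "min e e'" e' L] by auto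
    with \<open>e > 0\<close> \<open>e' > 0\<close> show ?thesis
      unfolding ball_filter_def by (intro CollectI exI[of _ "min e e'"]) simp
  qed
  show "g \<in> ball_filter L" if "f \<in> ball_filter L" "f \<subseteq> g" for f g
    using that by (auto simp: ball_filter_def)
qed

lemma liminf_ball_filter: "liminf_filter (ball_filter L) = L"
  unfolding liminf_filter_def
proof (rule ennreal_approx_SUP[symmetric])
  show "Inf f \<le> L" if "f \<in> ball_filter L" for f
    using center_mem_ball_filter[OF that] by (rule Inf_lower)
  fix e :: real assume "e > 0"
  let ?B = "{x. rdist x L \<le> ennreal e}"
  have "L \<le> L - ennreal e + ennreal e"
    by (simp add: diff_add_self_ennreal not_le less_imp_le)
  also have "\<dots> \<le> Inf ?B + ennreal e"
    by (intro add_right_mono Inf_greatest) (auto simp: rdist_le_iff ennreal_minus_le_iff add.commute)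
  finally have "L \<le> Inf ?B + ennreal e" .
  with ball_mem_ball_filter[OF \<open>e > 0\<close>] show "\<exists>f\<in>ball_filter L. L \<le> Inf f + ennreal e"
    by blast
qed

lemma flat_ball_filter: "flat rdist (ball_filter L)"
proof (rule flat_if_uniform_witness[OF is_filter_ball_filter])
  fix \<epsilon> :: real assume "\<epsilon> > 0"
  have "\<exists>y\<in>g. \<forall>x\<in>{x. rdist x L \<le> ennreal \<epsilon>}. rdist x y \<le> ennreal \<epsilon>"
    if "g \<in> ball_filter L" for g
    using center_mem_ball_filter[OF that] by blast
  with ball_mem_ball_filter[OF \<open>\<epsilon> > 0\<close>]
  show "\<exists>f\<in>ball_filter L. \<forall>g\<in>ball_filter L. \<exists>y\<in>g. \<forall>x\<in>f. rdist x y \<le> ennreal \<epsilon>"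
    by blast
qed

lemma closed_filter_ball_filter: "closed_filter rdist (ball_filter L)"
  unfolding closed_filter_def M_minus_rdist[OF is_filter_ball_filter] liminf_ball_filter
  by (auto simp: ball_filter_def)

lemma closed_weakly_flat_eq_ball_filter:
  assumes W: "weakly_flat rdist F" and C: "closed_filter rdist F"
  shows "F = ball_filter (liminf_filter F)"
proof
  have F: "is_filter F" using W by (simp add: weakly_flat_def)
  then show "F \<subseteq> ball_filter (liminf_filter F)"
    using C by (auto simp: closed_filter_def M_minus_rdist ball_filter_def)
  show "ball_filter (liminf_filter F) \<subseteq> F"
  proof
    fix g assume "g \<in> ball_filter (liminf_filter F)"
    then obtain e where "e > 0" and ball_g: "{x. rdist x (liminf_filter F) \<le> ennreal e} \<subseteq> g"
      by (auto simp: ball_filter_def)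
    have "{x. rdist x (liminf_filter F) \<le> ennreal e} \<in> F"
    proof (cases "liminf_filter F < \<infinity>")
      case True
      then obtain f where "f \<in> F" "liminf_filter F < Inf f + ennreal e"
        using SUP_approx_ennreal[OF \<open>e > 0\<close> is_filter_nonempty[OF F] liminf_filter_def]
        by (auto simp: less_top)
      then have "f \<subseteq> {x. rdist x (liminf_filter F) \<le> ennreal e}"
        by (auto simp: rdist_le_iff intro: order_trans[OF less_imp_le add_right_mono[OF Inf_lower]])
      with \<open>f \<in> F\<close> show ?thesis
        by (rule is_filter_mono[OF F])
    next
      case False
      then have "F = {f. \<infinity> \<in> f}"
        using weakly_flat_rdist_principal_if_liminf_top[OF W] by (metis less_top infinity_ennreal_def)
      then show ?thesis
        by (simp add: rdist_eq)
    qed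
    then show "g \<in> F"
      using ball_g by (rule is_filter_mono[OF F])
  qed
qed

lemma P1_completion_rdist: "P1_completion rdist = range ball_filter"
proof
  show "P1_completion rdist \<subseteq> range ball_filter"
  proof
    fix F assume "F \<in> P1_completion rdist"
    then have "F = ball_filter (liminf_filter F)"
      unfolding P1_completion_def by (auto intro!: closed_weakly_flat_eq_ball_filter)
    then show "F \<in> range ball_filter"
      by (rule image_eqI) simp
  qed
  show "range ball_filter \<subseteq> P1_completion rdist"
    unfolding P1_completion_def
    using flat_imp_weakly_flat[OF flat_ball_filter] closed_filter_ball_filter by blast
qed

lemma P2_completion_rdist: "P2_completion rdist = P1_completion rdist"
  unfolding P1_completion_def P2_completion_def
  by (auto intro: flat_imp_weakly_flat weakly_flat_rdist_imp_flat)

lemma gms_iso_P1_completion_rdist: "gms_iso (P1_completion rdist) (compl_dist rdist) UNIV rdist"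
  unfolding gms_iso_def P1_completion_rdist
proof (intro exI conjI ballI)
  show "bij_betw liminf_filter (range ball_filter) UNIV"
    by (rule bij_betw_byWitness[where f' = ball_filter]) (auto simp: liminf_ball_filter)
  show "rdist (liminf_filter F1) (liminf_filter F2) = compl_dist rdist F1 F2"
    if "F1 \<in> range ball_filter" "F2 \<in> range ball_filter" for F1 F2
    using that by (auto simp: compl_dist_rdist is_filter_ball_filter)
qed

theorem mainTheorem19:
  shows "(\<forall>F. is_filter F \<longrightarrow>
            (weakly_flat rdist F \<longleftrightarrow> liminf_filter F < \<infinity> \<or> F = {f. \<infinity> \<in> f}))
       \<and> (\<forall>F. weakly_flat rdist F \<longrightarrow> flat rdist F)
       \<and> (\<forall>F1 F2. weakly_flat rdist F1 \<and> weakly_flat rdist F2 \<longrightarrow>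
            compl_dist rdist F1 F2 = rdist (liminf_filter F1) (liminf_filter F2))
       \<and> gms_iso (P1_completion rdist) (compl_dist rdist) UNIV rdist
       \<and> gms_iso (P2_completion rdist) (compl_dist rdist) UNIV rdist"
  using weakly_flat_rdist_iff weakly_flat_rdist_imp_flat compl_dist_rdist
    gms_iso_P1_completion_rdist P2_completion_rdist
  by (simp add: weakly_flat_def)

end
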